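(* Let $\mathbb{K}$ be an algebraically closed field of characteristic zero, $\mathcal{C}\subset\mathbb{K}^2$ an affine irreducible plane curve, $A=(a,b)\in\mathbb{K}^2$, and assume that $\mathcal{C}_0\neq\emptyset$, that $\mathcal{C}$ is not a circle centered at $A$, and that $\mathcal{C}$ is not a line passing through $A$. Then there is no infinite set $D\subset\mathbb{K}\setminus\{0\}$ together with an irreducible algebraic curve $\mathcal{M}\subset\mathbb{K}^2$ such that $\mathcal{M}$ is a component of $\mathfrak{C}(\mathcal{C},A,d)$ for every $d\in D$; that is, at most finitely many distances $d$ give conchoids $\mathfrak{C}(\mathcal{C},A,d)$ all sharing a common component.
   Context: For $\mathcal{C}$ defined by an irreducible polynomial $f(y_1,y_2)$ and $d\in\mathbb{K}\setminus\{0\}$: $\mathfrak{B}(\mathcal{C},A,d)\subset\mathbb{K}^2\times\mathbb{K}^2\times\mathbb{K}$ is the set of $(\bar x,\bar y,w)$ with $f(y_1,y_2)=0$, $(x_1-y_1)^2+(x_2-y_2)^2=d^2$, $(y_2-b)(x_1-y_1)-(y_1-a)(x_2-y_2)=0$, $w((y_1-a)^2+(y_2-b)^2)=1$; the conchoid $\mathfrak{C}(\mathcal{C},A,d)$ is the Zariski closure in $\mathbb{K}^2$ of the projection of $\mathfrak{B}(\mathcal{C},A,d)$ onto the $\bar x$ coordinates. $\mathcal{C}_0=\{(p_1,p_2)\in\mathcal{C}:(p_1-a)^2+(p_2-b)^2\neq0\}$. A circle centered at $A$ of radius $r$ is $(y_1-a)^2+(y_2-b)^2=r^2$. *)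

theory Defs
  imports "HOL-Computational_Algebra.Computational_Algebra"
begin

text \<open>Bivariate polynomials over K are represented as nested univariate
polynomials K[y1][y2], i.e. of type 'a poly poly: the outer variable is y2,
the inner variable is y1.\<close>

definition eval2 :: "'a::comm_ring_1 poly poly \<Rightarrow> 'a \<Rightarrow> 'a \<Rightarrow> 'a" where
  "eval2 f y1 y2 = poly (poly f [:y2:]) y1"

definition zero_set :: "'a::comm_ring_1 poly poly set \<Rightarrow> ('a \<times> 'a) set" where
  "zero_set F = {(y1, y2). \<forall>f\<in>F. eval2 f y1 y2 = 0}"

definition zariski_closed :: "('a::comm_ring_1 \<times> 'a) set \<Rightarrow> bool" where
  "zariski_closed S \<longleftrightarrow> (\<exists>F. S = zero_set F)"

definition zariski_closure :: "('a::comm_ring_1 \<times> 'a) set \<Rightarrow> ('a \<times> 'a) set" where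
  "zariski_closure S = \<Inter> {T. zariski_closed T \<and> S \<subseteq> T}"

definition zariski_irreducible :: "('a::comm_ring_1 \<times> 'a) set \<Rightarrow> bool" where
  "zariski_irreducible S \<longleftrightarrow> zariski_closed S \<and> S \<noteq> {} \<and>
     (\<forall>S1 S2. zariski_closed S1 \<longrightarrow> zariski_closed S2 \<longrightarrow> S = S1 \<union> S2 \<longrightarrow> S = S1 \<or> S = S2)"

definition component_of :: "('a::comm_ring_1 \<times> 'a) set \<Rightarrow> ('a \<times> 'a) set \<Rightarrow> bool" where
  "component_of M S \<longleftrightarrow> zariski_irreducible M \<and> M \<subseteq> S \<and>
     (\<forall>N. zariski_irreducible N \<longrightarrow> M \<subseteq> N \<longrightarrow> N \<subseteq> S \<longrightarrow> N = M)"

definition curve :: "'a::comm_ring_1 poly poly \<Rightarrow> ('a \<times> 'a) set" where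
  "curve f = {(y1, y2). eval2 f y1 y2 = 0}"

definition irreducible_curve :: "('a::field \<times> 'a) set \<Rightarrow> bool" where
  "irreducible_curve M \<longleftrightarrow> (\<exists>g. irreducible g \<and> M = curve g)"

definition conchoid_B ::
  "'a::field poly poly \<Rightarrow> 'a \<times> 'a \<Rightarrow> 'a \<Rightarrow> (('a \<times> 'a) \<times> ('a \<times> 'a) \<times> 'a) set" where
  "conchoid_B f A d = (case A of (a, b) \<Rightarrow>
     {((x1, x2), (y1, y2), w).
        eval2 f y1 y2 = 0 \<and>
        (x1 - y1)^2 + (x2 - y2)^2 = d^2 \<and>
        (y2 - b) * (x1 - y1) - (y1 - a) * (x2 - y2) = 0 \<and>
        w * ((y1 - a)^2 + (y2 - b)^2) = 1})"

definition conchoid :: "'a::field poly poly \<Rightarrow> 'a \<times> 'a \<Rightarrow> 'a \<Rightarrow> ('a \<times> 'a) set" where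
  "conchoid f A d = zariski_closure (fst ` conchoid_B f A d)"

definition C0 :: "'a::field poly poly \<Rightarrow> 'a \<times> 'a \<Rightarrow> ('a \<times> 'a) set" where
  "C0 f A = (case A of (a, b) \<Rightarrow>
     {(p1, p2) \<in> curve f. (p1 - a)^2 + (p2 - b)^2 \<noteq> 0})"

definition circle_at :: "'a::field \<times> 'a \<Rightarrow> 'a \<Rightarrow> ('a \<times> 'a) set" where
  "circle_at A r = (case A of (a, b) \<Rightarrow> {(y1, y2). (y1 - a)^2 + (y2 - b)^2 = r^2})"

definition line_through :: "'a::field \<times> 'a \<Rightarrow> ('a \<times> 'a) set \<Rightarrow> bool" where
  "line_through A L \<longleftrightarrow> (case A of (a, b) \<Rightarrow>
     \<exists>u v. (u, v) \<noteq> (0, 0) \<and> L = {(y1, y2). u * (y1 - a) + v * (y2 - b) = 0})"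

end

theory Submission
  imports Defs
begin

text \<open>
  A point \<open>X \<noteq> A\<close> lies on the conchoid at distance \<open>d\<close> exactly when the restriction
  \<open>F\<^sub>X(t) = f(A + t (X - A))\<close> of \<open>f\<close> to the line \<open>AX\<close> has a root \<open>t\<close> with
  \<open>(1 - t)\<^sup>2 |X - A|\<^sup>2 = d\<^sup>2\<close>. Writing \<open>t = 1 \<mp> u\<close>, the product \<open>F\<^sub>X(1 - u) F\<^sub>X(1 + u)\<close> is even
  in \<open>u\<close>, so replacing \<open>u\<^sup>2 |X - A|\<^sup>2\<close> by \<open>d\<^sup>2\<close> yields a polynomial in \<open>X\<close> that vanishes on the
  conchoid away from \<open>A\<close>, and is nonzero because \<open>C\<close> is not a line through \<open>A\<close>.

  If the common component \<open>M\<close> contains a point \<open>X\<close> with \<open>|X - A|\<^sup>2 \<noteq> 0\<close>, every \<open>d \<in> D\<close>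
  satisfies \<open>d\<^sup>2 = (1 - z)\<^sup>2 |X - A|\<^sup>2\<close> for one of the finitely many roots \<open>z\<close> of the nonzero
  polynomial \<open>F\<^sub>X\<close>, so \<open>D\<close> is finite. Otherwise the irreducible \<open>M\<close> lies on one of the two
  isotropic lines through \<open>A\<close>; the conchoid meets such a line only at \<open>A\<close> and finitely many
  further points, whereas an irreducible curve over an algebraically closed field is infinite.
\<close>

lemma eval2_add [simp]: "eval2 (p + q) x y = eval2 p x y + eval2 q x y"
  by (simp add: eval2_def)

lemma eval2_mult [simp]: "eval2 (p * q) x y = eval2 p x y * eval2 q x y"
  by (simp add: eval2_def)

lemma eval2_minus [simp]: "eval2 (p - q) x y = eval2 p x y - eval2 q x y"
  by (simp add: eval2_def)

lemma eval2_0 [simp]: "eval2 0 x y = 0"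
  by (simp add: eval2_def)

lemma eval2_1 [simp]: "eval2 1 x y = 1"
  by (simp add: eval2_def)

lemma eval2_power [simp]: "eval2 (p ^ n) x y = eval2 p x y ^ n"
  by (simp add: eval2_def)

lemma eval2_sum: "eval2 (\<Sum>k\<in>A. p k) x y = (\<Sum>k\<in>A. eval2 (p k) x y)"
  by (simp add: eval2_def poly_sum)

lemma eval2_const [simp]: "eval2 [:[:c:]:] x y = c"
  by (simp add: eval2_def)

lemma eval2_X1_minus [simp]: "eval2 [:[:-a, 1:]:] x y = x - a"
  by (simp add: eval2_def)

lemma eval2_X2_minus [simp]: "eval2 [:[:-b:], 1:] x y = y - b"
  by (simp add: eval2_def)

lemma poly_hom_commute:
  fixes h :: "'b::comm_ring_1 \<Rightarrow> 'c::comm_ring_1"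
  assumes "\<And>a b. h (a + b) = h a + h b" and "\<And>a b. h (a * b) = h a * h b" and "h 0 = 0"
  shows "h (poly Q p) = poly (map_poly h Q) (h p)"
  by (induction Q) (simp_all add: map_poly_pCons assms)

lemma eval2_conv_map_poly: "eval2 f x y = poly (map_poly (\<lambda>c. poly c x) f) y"
  unfolding eval2_def by (rule poly_hom_commute[where h = "\<lambda>c. poly c x" and p = "[:y:]", simplified])

lemma ex_poly_eq_eval2_on_line:
  "\<exists>W. \<forall>s. poly W s = eval2 Q (c1 + k1 * s) (c2 + k2 * s)"
proof -
  let ?W = "poly (map_poly (\<lambda>c. pcompose c [:c1, k1:]) Q) [:c2, k2:]"
  have "poly ?W s = eval2 Q (c1 + k1 * s) (c2 + k2 * s)" for s
  proof -
    have "poly ?W s = poly (map_poly (\<lambda>c. poly c s) (map_poly (\<lambda>c. pcompose c [:c1, k1:]) Q)) (c2 + k2 * s)"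
      by (subst poly_hom_commute[where h = "\<lambda>c. poly c s"]) (simp_all add: mult.commute)
    also have "\<dots> = eval2 Q (c1 + k1 * s) (c2 + k2 * s)"
      by (simp add: eval2_conv_map_poly map_poly_map_poly o_def poly_pcompose pcompose_0 algebra_simps)
    finally show ?thesis .
  qed
  then show ?thesis by blast
qed

text \<open>Trivariate polynomials K[x][y][u], the outer variable u being the parameter along a ray.\<close>

definition eval3 :: "'a::comm_ring_1 poly poly poly \<Rightarrow> 'a \<Rightarrow> 'a \<Rightarrow> 'a \<Rightarrow> 'a" where
  "eval3 p x y u = eval2 (poly p [:[:u:]:]) x y"

lemma eval3_add [simp]: "eval3 (p + q) x y u = eval3 p x y u + eval3 q x y u"
  by (simp add: eval3_def)

lemma eval3_mult [simp]: "eval3 (p * q) x y u = eval3 p x y u * eval3 q x y u"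
  by (simp add: eval3_def)

lemma eval3_minus [simp]: "eval3 (p - q) x y u = eval3 p x y u - eval3 q x y u"
  by (simp add: eval3_def)

lemma eval3_0 [simp]: "eval3 0 x y u = 0"
  by (simp add: eval3_def)

lemma eval3_1 [simp]: "eval3 1 x y u = 1"
  by (simp add: eval3_def)

lemma eval3_const [simp]: "eval3 [:[:[:c:]:]:] x y u = c"
  by (simp add: eval3_def)

lemma eval3_X1 [simp]: "eval3 [:[:[:0, 1:]:]:] x y u = x"
  by (simp add: eval3_def eval2_def)

lemma eval3_X2 [simp]: "eval3 [:[:0, 1:]:] x y u = y"
  by (simp add: eval3_def eval2_def)

lemma eval3_X3 [simp]: "eval3 [:0, 1:] x y u = u"
  by (simp add: eval3_def)

lemma eval3_conv_map_poly: "eval3 p x y u = poly (map_poly (\<lambda>c. eval2 c x y) p) u"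
  unfolding eval3_def by (rule poly_hom_commute[where h = "\<lambda>c. eval2 c x y" and p = "[:[:u:]:]", simplified])

lemma eval3_poly: "eval3 (poly Q p) x y u = poly (map_poly (\<lambda>c. eval3 c x y u) Q) (eval3 p x y u)"
  by (rule poly_hom_commute) simp_all

definition compose2 ::
  "'a::comm_ring_1 poly poly \<Rightarrow> 'a poly poly poly \<Rightarrow> 'a poly poly poly \<Rightarrow> 'a poly poly poly" where
  "compose2 f p1 p2 = poly (map_poly (\<lambda>c. poly (map_poly (\<lambda>a. [:[:[:a:]:]:]) c) p1) f) p2"

lemma eval3_compose2: "eval3 (compose2 f p1 p2) x y u = eval2 f (eval3 p1 x y u) (eval3 p2 x y u)"
proof -
  have inner: "eval3 (poly (map_poly (\<lambda>a. [:[:[:a:]:]:]) c) p1) x y u = poly c (eval3 p1 x y u)" for c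
    by (simp add: eval3_poly map_poly_map_poly o_def)
  show ?thesis
    unfolding compose2_def eval3_poly eval2_conv_map_poly by (simp add: map_poly_map_poly o_def inner)
qed

lemma poly_even_conv_sum:
  fixes p :: "'a::field_char_0 poly"
  assumes even: "poly p (- u) = poly p u" and deg: "degree p \<le> n"
  shows "poly p u = (\<Sum>j\<le>n. coeff p (2 * j) * u ^ (2 * j))"
proof -
  have ext: "poly p z = (\<Sum>k\<le>Suc (2 * n). coeff p k * z ^ k)" for z
    unfolding poly_altdef by (rule sum.mono_neutral_left) (use deg in \<open>auto simp: coeff_eq_0\<close>)
  have "2 * poly p u = poly p u + poly p (- u)"
    using even by simp
  also have "\<dots> = (\<Sum>k\<le>Suc (2 * n). coeff p k * (u ^ k + (- u) ^ k))"
    unfolding ext by (simp add: sum.distrib[symmetric] algebra_simps)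
  also have "\<dots> = (\<Sum>j\<le>n. coeff p (2 * j) * (u ^ (2 * j) + (- u) ^ (2 * j)) +
      coeff p (Suc (2 * j)) * (u ^ Suc (2 * j) + (- u) ^ Suc (2 * j)))"
    by (rule sum.in_pairs_0)
  also have "\<dots> = 2 * (\<Sum>j\<le>n. coeff p (2 * j) * u ^ (2 * j))"
  proof -
    have "(- u) ^ (2 * j) = u ^ (2 * j)" "(- u) ^ Suc (2 * j) = - (u ^ Suc (2 * j))" for j
      by (simp_all add: power_minus_even power_minus_odd)
    then show ?thesis
      by (simp add: sum_distrib_left mult.left_commute)
  qed
  finally show ?thesis
    by simp
qed

definition ray :: "'a::comm_ring_1 poly poly \<Rightarrow> 'a \<Rightarrow> 'a \<Rightarrow> 'a \<Rightarrow> 'a \<Rightarrow> 'a \<Rightarrow> 'a" where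
  "ray f a b x y t = eval2 f (a + t * (x - a)) (b + t * (y - b))"

definition ray_poly ::
  "'a::comm_ring_1 poly poly \<Rightarrow> 'a \<Rightarrow> 'a \<Rightarrow> 'a poly poly poly \<Rightarrow> 'a poly poly poly" where
  "ray_poly f a b T = compose2 f
     ([:[:[:a:]:]:] + T * ([:[:[:0, 1:]:]:] - [:[:[:a:]:]:]))
     ([:[:[:b:]:]:] + T * ([:[:0, 1:]:] - [:[:[:b:]:]:]))"

lemma eval3_ray_poly: "eval3 (ray_poly f a b T) x y u = ray f a b x y (eval3 T x y u)"
  unfolding ray_poly_def eval3_compose2 ray_def
  by (simp only: eval3_add eval3_mult eval3_minus eval3_const eval3_X1 eval3_X2)

definition ray_pair_poly :: "'a::comm_ring_1 poly poly \<Rightarrow> 'a \<Rightarrow> 'a \<Rightarrow> 'a poly poly poly" where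
  "ray_pair_poly f a b = ray_poly f a b (1 - [:0, 1:]) * ray_poly f a b (1 + [:0, 1:])"

lemma eval3_ray_pair_poly:
  "eval3 (ray_pair_poly f a b) x y u = ray f a b x y (1 - u) * ray f a b x y (1 + u)"
  by (simp add: ray_pair_poly_def eval3_ray_poly)

definition sqdist_poly :: "'a::comm_ring_1 \<Rightarrow> 'a \<Rightarrow> 'a poly poly" where
  "sqdist_poly a b = [:[:-a, 1:]:] ^ 2 + [:[:-b:], 1:] ^ 2"

lemma eval2_sqdist_poly [simp]: "eval2 (sqdist_poly a b) x y = (x - a) ^ 2 + (y - b) ^ 2"
  by (simp add: sqdist_poly_def)

text \<open>The pair product is even in \<open>u\<close>; substituting \<open>e\<close> for \<open>u\<^sup>2 |X - A|\<^sup>2\<close> in its even part and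
  clearing denominators gives a polynomial in \<open>X\<close> alone.\<close>

definition conchoid_poly :: "'a::comm_ring_1 poly poly \<Rightarrow> 'a \<Rightarrow> 'a \<Rightarrow> 'a \<Rightarrow> 'a poly poly" where
  "conchoid_poly f a b e = (\<Sum>j\<le>degree (ray_pair_poly f a b).
     coeff (ray_pair_poly f a b) (2 * j) * [:[:e ^ j:]:] *
     sqdist_poly a b ^ (degree (ray_pair_poly f a b) - j))"

lemma eval2_conchoid_poly:
  fixes f :: "'a::field_char_0 poly poly"
  assumes ue: "u ^ 2 * ((x - a) ^ 2 + (y - b) ^ 2) = e"
  shows "eval2 (conchoid_poly f a b e) x y =
    ((x - a) ^ 2 + (y - b) ^ 2) ^ degree (ray_pair_poly f a b) *
    (ray f a b x y (1 - u) * ray f a b x y (1 + u))"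
proof -
  let ?G = "ray_pair_poly f a b"
  let ?m = "degree ?G"
  let ?N = "(x - a) ^ 2 + (y - b) ^ 2"
  define g where "g = map_poly (\<lambda>c. eval2 c x y) ?G"
  have g: "poly g z = ray f a b x y (1 - z) * ray f a b x y (1 + z)" for z
    unfolding g_def eval3_conv_map_poly[symmetric] by (rule eval3_ray_pair_poly)
  have "poly g u = (\<Sum>j\<le>?m. coeff g (2 * j) * u ^ (2 * j))"
  proof (rule poly_even_conv_sum)
    show "poly g (- u) = poly g u"
      by (simp add: g mult.commute)
  qed (simp add: g_def map_poly_degree_leq)
  then have even_part: "ray f a b x y (1 - u) * ray f a b x y (1 + u) =
      (\<Sum>j\<le>?m. eval2 (coeff ?G (2 * j)) x y * u ^ (2 * j))"
    by (simp only: g) (simp add: g_def coeff_map_poly)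
  have "eval2 (conchoid_poly f a b e) x y =
      (\<Sum>j\<le>?m. eval2 (coeff ?G (2 * j)) x y * e ^ j * ?N ^ (?m - j))"
    by (simp only: conchoid_poly_def eval2_sum eval2_mult eval2_power eval2_const eval2_sqdist_poly)
  also have "\<dots> = (\<Sum>j\<le>?m. ?N ^ ?m * (eval2 (coeff ?G (2 * j)) x y * u ^ (2 * j)))"
  proof (rule sum.cong[OF refl])
    fix j
    assume "j \<in> {..?m}"
    then have "?N ^ ?m = ?N ^ j * ?N ^ (?m - j)"
      by (simp add: power_add[symmetric])
    moreover have "e ^ j = u ^ (2 * j) * ?N ^ j"
      by (simp add: ue[symmetric] power_mult_distrib power_mult)
    ultimately show "eval2 (coeff ?G (2 * j)) x y * e ^ j * ?N ^ (?m - j) =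
        ?N ^ ?m * (eval2 (coeff ?G (2 * j)) x y * u ^ (2 * j))"
      by (simp add: mult_ac)
  qed
  finally show ?thesis
    by (simp add: even_part sum_distrib_left)
qed

definition line_poly :: "'a::comm_ring_1 \<Rightarrow> 'a \<Rightarrow> 'a \<Rightarrow> 'a \<Rightarrow> 'a poly poly" where
  "line_poly u v a b = [:[:- (u * a + v * b), u:], [:v:]:]"

lemma eval2_line_poly [simp]: "eval2 (line_poly u v a b) x y = u * (x - a) + v * (y - b)"
  by (simp add: line_poly_def eval2_def algebra_simps)

lemma line_param:
  fixes u v :: "'a::field"
  assumes "(u, v) \<noteq> (0, 0)" and "u * (x - a) + v * (y - b) = 0"
  obtains s where "x = a + v * s" and "y = b - u * s"
proof (cases "v = 0")
  case True
  with assms show ?thesis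
    by (intro that[of "(b - y) / u"]) auto
next
  case False
  with assms(2) show ?thesis
    by (intro that[of "(x - a) / v"]) (auto simp: field_simps)
qed

lemma nonvertical_line_poly_dvd:
  fixes Q :: "'a::field_char_0 poly poly"
  assumes v: "v \<noteq> 0" and van: "\<And>x y. u * (x - a) + v * (y - b) = 0 \<Longrightarrow> eval2 Q x y = 0"
  shows "line_poly u v a b dvd Q"
proof -
  define \<phi> where "\<phi> = [:(u * a + v * b) / v, - u / v:]"
  have "poly (poly Q \<phi>) x = 0" for x
  proof -
    have "poly (poly Q \<phi>) x = poly (map_poly (\<lambda>c. poly c x) Q) (poly \<phi> x)"
      by (rule poly_hom_commute) simp_all
    also have "\<dots> = eval2 Q x (poly \<phi> x)"
      by (simp add: eval2_conv_map_poly)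
    also have "\<dots> = 0"
      by (rule van) (use v in \<open>simp add: \<phi>_def field_simps\<close>)
    finally show ?thesis .
  qed
  then have "poly Q \<phi> = 0"
    using poly_all_0_iff_0 by blast
  then have "Q = [:- \<phi>, 1:] * synthetic_div Q \<phi>"
    using synthetic_div_correct'[of \<phi> Q] by simp
  also have "[:- \<phi>, 1:] = smult [:1 / v:] (line_poly u v a b)"
    using v by (simp add: line_poly_def one_pCons) (simp add: \<phi>_def field_simps)
  finally have "Q = line_poly u v a b * smult [:1 / v:] (synthetic_div Q \<phi>)"
    by (simp only: mult_smult_left mult_smult_right)
  then show ?thesis
    by (rule dvdI)
qed

lemma vertical_line_poly_dvd:
  fixes Q :: "'a::field_char_0 poly poly"
  assumes u: "u \<noteq> 0" and van: "\<And>y. eval2 Q a y = 0"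
  shows "line_poly u 0 a b dvd Q"
proof -
  have "map_poly (\<lambda>c. poly c a) Q = 0"
    using van poly_all_0_iff_0 by (auto simp: eval2_conv_map_poly)
  then have coeff_root: "poly (coeff Q k) a = 0" for k
    by (metis coeff_0 coeff_map_poly poly_0)
  define R where "R = map_poly (\<lambda>c. synthetic_div c a) Q"
  have "Q = smult [:-a, 1:] R"
  proof (rule poly_eqI)
    fix k
    have "coeff Q k = [:-a, 1:] * synthetic_div (coeff Q k) a"
      using synthetic_div_correct'[of a "coeff Q k"] coeff_root[of k] by simp
    then show "coeff Q k = coeff (smult [:-a, 1:] R) k"
      by (simp add: R_def coeff_map_poly)
  qed
  also have "[:-a, 1:] = [:- (u * a), u:] * [:1 / u:]"
    using u by simp
  also have "smult \<dots> R = line_poly u 0 a b * smult [:1 / u:] R"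
    by (simp only: smult_smult[symmetric] mult_smult_right smult_1_left) (simp add: line_poly_def)
  finally show ?thesis
    by (rule dvdI)
qed

lemma line_poly_dvd:
  fixes Q :: "'a::field_char_0 poly poly"
  assumes uv: "(u, v) \<noteq> (0, 0)" and van: "\<And>x y. u * (x - a) + v * (y - b) = 0 \<Longrightarrow> eval2 Q x y = 0"
  shows "line_poly u v a b dvd Q"
proof (cases "v = 0")
  case True
  with uv van show ?thesis
    using vertical_line_poly_dvd[of u Q a b] by simp
next
  case False
  then show ?thesis
    by (rule nonvertical_line_poly_dvd[OF _ van])
qed

lemma line_poly_not_unit:
  fixes u v :: "'a::field"
  assumes "(u, v) \<noteq> (0, 0)"
  shows "\<not> is_unit (line_poly u v a b)"
  using assms by (auto simp: line_poly_def is_unit_poly_iff)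

lemma line_through_if_vanishing_on_line:
  fixes f :: "'a::field_char_0 poly poly"
  assumes irr: "irreducible f" and uv: "(u, v) \<noteq> (0, 0)"
    and van: "\<And>x y. u * (x - a) + v * (y - b) = 0 \<Longrightarrow> eval2 f x y = 0"
  shows "line_through (a, b) (curve f)"
proof -
  obtain q where fq: "f = line_poly u v a b * q"
    using line_poly_dvd[of u v a b f, OF uv van] by (auto elim: dvdE)
  then have "is_unit q"
    using irreducibleD[OF irr fq] line_poly_not_unit[OF uv] by blast
  then obtain c where q: "q = [:[:c:]:]" and "c \<noteq> 0"
    by (auto simp: is_unit_poly_iff dvd_field_iff)
  then have "eval2 f x y = (u * (x - a) + v * (y - b)) * c" for x y
    by (simp only: fq q eval2_mult eval2_line_poly eval2_const)
  with \<open>c \<noteq> 0\<close> have "curve f = {(y1, y2). u * (y1 - a) + v * (y2 - b) = 0}"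
    by (auto simp: curve_def)
  with uv show ?thesis
    unfolding line_through_def by auto
qed

lemma finite_line_inter_zeros:
  fixes Q :: "'a::field_char_0 poly poly"
  assumes uv: "(u, v) \<noteq> (0, 0)" and ndvd: "\<not> line_poly u v a b dvd Q"
  shows "finite {(x, y). u * (x - a) + v * (y - b) = 0 \<and> eval2 Q x y = 0}"
proof -
  obtain W where W: "\<And>s. poly W s = eval2 Q (a + v * s) (b + (- u) * s)"
    using ex_poly_eq_eval2_on_line by blast
  have "W \<noteq> 0"
  proof
    assume "W = 0"
    have "eval2 Q x y = 0" if on_line: "u * (x - a) + v * (y - b) = 0" for x y
    proof -
      obtain s where "x = a + v * s" "y = b - u * s"
        using line_param[OF uv on_line] by blast
      with W[of s] \<open>W = 0\<close> show ?thesis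
        by simp
    qed
    with line_poly_dvd[OF uv] ndvd show False
      by blast
  qed
  have "{(x, y). u * (x - a) + v * (y - b) = 0 \<and> eval2 Q x y = 0} \<subseteq>
      (\<lambda>s. (a + v * s, b - u * s)) ` {s. poly W s = 0}"
  proof clarify
    fix x y
    assume on_line: "u * (x - a) + v * (y - b) = 0" and "eval2 Q x y = 0"
    moreover obtain s where "x = a + v * s" "y = b - u * s"
      using line_param[OF uv on_line] by blast
    ultimately show "(x, y) \<in> (\<lambda>s. (a + v * s, b - u * s)) ` {s. poly W s = 0}"
      by (auto simp: W)
  qed
  moreover have "finite {s. poly W s = 0}"
    using poly_roots_finite[OF \<open>W \<noteq> 0\<close>] .
  ultimately show ?thesis
    using finite_subset by blast
qed

lemma ex_scalar_multiple_if_cross_eq_0: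
  fixes p1 p2 q1 q2 :: "'a::field"
  assumes "(p1, p2) \<noteq> (0, 0)" and "p2 * q1 = p1 * q2"
  obtains \<mu> where "q1 = \<mu> * p1" and "q2 = \<mu> * p2"
proof (cases "p1 = 0")
  case True
  with assms show ?thesis
    by (intro that[of "q2 / p2"]) auto
next
  case False
  with assms(2) show ?thesis
    by (intro that[of "q1 / p1"]) (auto simp: field_simps)
qed

lemma conchoid_B_point_imp_ray_root:
  fixes f :: "'a::field poly poly"
  assumes "(x1, x2) \<in> fst ` conchoid_B f (a, b) d" and "(x1, x2) \<noteq> (a, b)"
  shows "(x1 - a) ^ 2 + (x2 - b) ^ 2 \<noteq> 0 \<and>
    (\<exists>t. ray f a b x1 x2 t = 0 \<and> (1 - t) ^ 2 * ((x1 - a) ^ 2 + (x2 - b) ^ 2) = d ^ 2)"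
proof -
  obtain y1 y2 w where on_curve: "eval2 f y1 y2 = 0"
    and dist: "(x1 - y1) ^ 2 + (x2 - y2) ^ 2 = d ^ 2"
    and collinear: "(y2 - b) * (x1 - y1) = (y1 - a) * (x2 - y2)"
    and inverse: "w * ((y1 - a) ^ 2 + (y2 - b) ^ 2) = 1"
    using assms(1) by (auto simp: conchoid_B_def)
  have N_y: "(y1 - a) ^ 2 + (y2 - b) ^ 2 \<noteq> 0"
    using inverse by auto
  then have "(y1 - a, y2 - b) \<noteq> (0, 0)"
    by auto
  then obtain \<mu> where \<mu>: "x1 - y1 = \<mu> * (y1 - a)" "x2 - y2 = \<mu> * (y2 - b)"
    using collinear by (rule ex_scalar_multiple_if_cross_eq_0)
  have x1: "x1 - a = (1 + \<mu>) * (y1 - a)" and x2: "x2 - b = (1 + \<mu>) * (y2 - b)"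
    using \<mu> by (simp_all add: algebra_simps)
  have "1 + \<mu> \<noteq> 0"
    using assms(2) x1 x2 by auto
  define t where "t = 1 / (1 + \<mu>)"
  have N_x: "(x1 - a) ^ 2 + (x2 - b) ^ 2 = (1 + \<mu>) ^ 2 * ((y1 - a) ^ 2 + (y2 - b) ^ 2)"
    by (simp add: x1 x2 power2_eq_square algebra_simps)
  have "a + t * (x1 - a) = y1" "b + t * (x2 - b) = y2"
    using \<open>1 + \<mu> \<noteq> 0\<close> by (simp_all add: t_def x1 x2)
  then have "ray f a b x1 x2 t = 0"
    using on_curve by (simp add: ray_def)
  moreover have "(1 - t) ^ 2 * ((x1 - a) ^ 2 + (x2 - b) ^ 2) = d ^ 2"
  proof -
    have "(1 - t) * (1 + \<mu>) = \<mu>"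
      using \<open>1 + \<mu> \<noteq> 0\<close> by (simp add: t_def field_simps)
    then have "(1 - t) ^ 2 * ((x1 - a) ^ 2 + (x2 - b) ^ 2) = \<mu> ^ 2 * ((y1 - a) ^ 2 + (y2 - b) ^ 2)"
      unfolding N_x by (metis (no_types, lifting) mult.assoc power_mult_distrib)
    also have "\<dots> = (x1 - y1) ^ 2 + (x2 - y2) ^ 2"
      by (simp only: \<mu> power_mult_distrib distrib_left)
    finally show ?thesis
      using dist by simp
  qed
  moreover have "(x1 - a) ^ 2 + (x2 - b) ^ 2 \<noteq> 0"
    using N_x N_y \<open>1 + \<mu> \<noteq> 0\<close> by simp
  ultimately show ?thesis
    by blast
qed

lemma conchoid_poly_vanishes_on_conchoid_B:
  fixes f :: "'a::field_char_0 poly poly"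
  assumes "(x1, x2) \<in> fst ` conchoid_B f (a, b) d" and "(x1, x2) \<noteq> (a, b)"
  shows "eval2 (conchoid_poly f a b (d ^ 2)) x1 x2 = 0"
proof -
  obtain t where root: "ray f a b x1 x2 t = 0"
    and dist: "(1 - t) ^ 2 * ((x1 - a) ^ 2 + (x2 - b) ^ 2) = d ^ 2"
    using conchoid_B_point_imp_ray_root[OF assms] by blast
  have "eval2 (conchoid_poly f a b (d ^ 2)) x1 x2 =
      ((x1 - a) ^ 2 + (x2 - b) ^ 2) ^ degree (ray_pair_poly f a b) *
      (ray f a b x1 x2 (1 - (1 - t)) * ray f a b x1 x2 (1 + (1 - t)))"
    by (rule eval2_conchoid_poly[OF dist])
  with root show ?thesis
    by simp
qed

lemma zariski_closure_vanishing:
  assumes "(x, y) \<in> zariski_closure S" and "\<And>z1 z2. (z1, z2) \<in> S \<Longrightarrow> eval2 P z1 z2 = 0"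
  shows "eval2 P x y = 0"
proof -
  have "zariski_closed (zero_set {P})"
    by (auto simp: zariski_closed_def)
  moreover have "S \<subseteq> zero_set {P}"
    using assms(2) by (auto simp: zero_set_def)
  ultimately have "zariski_closure S \<subseteq> zero_set {P}"
    unfolding zariski_closure_def by blast
  with assms(1) show ?thesis
    by (auto simp: zero_set_def)
qed

lemma zariski_closure_vanishing_off_point:
  fixes P :: "'a::idom poly poly"
  assumes "(x, y) \<in> zariski_closure S" and "(x, y) \<noteq> (a, b)"
    and van: "\<And>z1 z2. (z1, z2) \<in> S \<Longrightarrow> (z1, z2) \<noteq> (a, b) \<Longrightarrow> eval2 P z1 z2 = 0"
  shows "eval2 P x y = 0"
proof -
  have products: "eval2 P z1 z2 * (z1 - a) = 0 \<and> eval2 P z1 z2 * (z2 - b) = 0"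
    if "(z1, z2) \<in> S" for z1 z2
    using van[OF that] by (cases "(z1, z2) = (a, b)") auto
  have "eval2 (P * [:[:-a, 1:]:]) x y = 0"
    by (rule zariski_closure_vanishing[OF assms(1)]) (simp only: eval2_mult eval2_X1_minus products)
  moreover have "eval2 (P * [:[:-b:], 1:]) x y = 0"
    by (rule zariski_closure_vanishing[OF assms(1)]) (simp only: eval2_mult eval2_X2_minus products)
  ultimately show ?thesis
    using assms(2) by (simp only: eval2_mult eval2_X1_minus eval2_X2_minus) auto
qed

lemma conchoid_poly_vanishes_on_conchoid:
  fixes f :: "'a::field_char_0 poly poly"
  assumes "(x, y) \<in> conchoid f (a, b) d" and "(x, y) \<noteq> (a, b)"
  shows "eval2 (conchoid_poly f a b (d ^ 2)) x y = 0"
  using assms conchoid_poly_vanishes_on_conchoid_B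
  unfolding conchoid_def by (rule zariski_closure_vanishing_off_point)

lemma ex_nonzero_poly_eq_ray:
  fixes f :: "'a::field_char_0 poly poly"
  assumes irr: "irreducible f" and nl: "\<not> line_through (a, b) (curve f)"
    and pq: "(p, q) \<noteq> (a, b)"
  obtains R where "R \<noteq> 0" and "\<And>t. poly R t = ray f a b p q t"
proof -
  obtain R where R: "\<And>t. poly R t = ray f a b p q t"
    using ex_poly_eq_eval2_on_line[of f a "p - a" b "q - b"] by (auto simp: ray_def mult.commute)
  have uv: "(q - b, a - p) \<noteq> (0, 0)"
    using pq by auto
  have "R \<noteq> 0"
  proof
    assume "R = 0"
    have "eval2 f x y = 0" if on_line: "(q - b) * (x - a) + (a - p) * (y - b) = 0" for x y
    proof -
      obtain s where "x = a + (a - p) * s" "y = b - (q - b) * s"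
        using line_param[OF uv on_line] by blast
      then have "a + (- s) * (p - a) = x" "b + (- s) * (q - b) = y"
        by (simp_all add: algebra_simps)
      then have "eval2 f x y = poly R (- s)"
        by (simp add: R ray_def)
      with \<open>R = 0\<close> show ?thesis
        by simp
    qed
    with line_through_if_vanishing_on_line[OF irr uv] nl show False
      by blast
  qed
  then show ?thesis
    using R by (rule that)
qed

lemma conchoid_poly_nonzero:
  fixes f :: "'a::field_char_0 poly poly"
  assumes irr: "irreducible f" and nl: "\<not> line_through (a, b) (curve f)"
  shows "conchoid_poly f a b (d ^ 2) \<noteq> 0"
proof -
  obtain H where "H \<noteq> 0" and H: "\<And>t. poly H t = ray f a b (a + 1) b t"
    using ex_nonzero_poly_eq_ray[OF irr nl, of "a + 1" b] by auto
  let ?Z = "{r. poly H r = 0}"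
  have "finite (insert 0 ((\<lambda>r. r + d) ` ?Z \<union> (\<lambda>r. r - d) ` ?Z))"
    using poly_roots_finite[OF \<open>H \<noteq> 0\<close>] by simp
  then obtain l where l: "l \<notin> insert 0 ((\<lambda>r. r + d) ` ?Z \<union> (\<lambda>r. r - d) ` ?Z)"
    using ex_new_if_finite[OF infinite_UNIV_char_0] by blast
  then have "l \<noteq> 0" and "poly H (l - d) \<noteq> 0" and "poly H (l + d) \<noteq> 0"
    by force+
  have "eval2 (conchoid_poly f a b (d ^ 2)) (a + l) b =
      ((a + l - a) ^ 2 + (b - b) ^ 2) ^ degree (ray_pair_poly f a b) *
      (ray f a b (a + l) b (1 - d / l) * ray f a b (a + l) b (1 + d / l))"
    by (rule eval2_conchoid_poly) (use \<open>l \<noteq> 0\<close> in \<open>simp add: power_divide\<close>)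
  also have "ray f a b (a + l) b (1 - d / l) = poly H (l - d)"
    using \<open>l \<noteq> 0\<close> by (simp add: H ray_def algebra_simps diff_divide_distrib)
  also have "ray f a b (a + l) b (1 + d / l) = poly H (l + d)"
    using \<open>l \<noteq> 0\<close> by (simp add: H ray_def algebra_simps add_divide_distrib)
  finally have "eval2 (conchoid_poly f a b (d ^ 2)) (a + l) b \<noteq> 0"
    using \<open>l \<noteq> 0\<close> \<open>poly H (l - d) \<noteq> 0\<close> \<open>poly H (l + d) \<noteq> 0\<close> by simp
  then show ?thesis
    by auto
qed

lemma finite_square_roots:
  fixes c :: "'a::field"
  shows "finite {d. d ^ 2 = c}"
proof -
  have "{d. d ^ 2 = c} \<subseteq> {d. poly [:-c, 0, 1:] d = 0}"
    by (auto simp: power2_eq_square)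
  moreover have "finite {d. poly [:-c, 0, 1:] d = 0}"
    by (rule poly_roots_finite) simp
  ultimately show ?thesis
    by (rule finite_subset)
qed

lemma finite_distances_common_point:
  fixes f :: "'a::{alg_closed_field, field_char_0} poly poly"
  assumes irr: "irreducible f" and nl: "\<not> line_through (a, b) (curve f)"
    and N: "(p - a) ^ 2 + (q - b) ^ 2 \<noteq> 0"
    and on_conchoids: "\<And>d. d \<in> D \<Longrightarrow> (p, q) \<in> conchoid f (a, b) d"
  shows "finite D"
proof -
  let ?N = "(p - a) ^ 2 + (q - b) ^ 2"
  have pq: "(p, q) \<noteq> (a, b)"
    using N by auto
  obtain R where "R \<noteq> 0" and R: "\<And>t. poly R t = ray f a b p q t"
    using ex_nonzero_poly_eq_ray[OF irr nl pq] by blast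
  let ?E = "(\<lambda>z. (1 - z) ^ 2 * ?N) ` {z. poly R z = 0}"
  have "D \<subseteq> (\<Union>c\<in>?E. {d. d ^ 2 = c})"
  proof
    fix d
    assume "d \<in> D"
    obtain u where "u ^ 2 = d ^ 2 / ?N"
      using nth_root_exists[of 2] by auto
    then have ue: "u ^ 2 * ?N = d ^ 2"
      using N by simp
    have "eval2 (conchoid_poly f a b (d ^ 2)) p q = 0"
      using conchoid_poly_vanishes_on_conchoid[OF on_conchoids[OF \<open>d \<in> D\<close>] pq] .
    then have "poly R (1 - u) = 0 \<or> poly R (1 + u) = 0"
      using N by (simp add: eval2_conchoid_poly[OF ue] R)
    then have "u ^ 2 * ?N \<in> ?E"
    proof
      assume "poly R (1 - u) = 0"
      then show ?thesis
        by (intro image_eqI[of _ _ "1 - u"]) auto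
    next
      assume "poly R (1 + u) = 0"
      then show ?thesis
        by (intro image_eqI[of _ _ "1 + u"]) (auto simp: power2_eq_square)
    qed
    with ue show "d \<in> (\<Union>c\<in>?E. {d. d ^ 2 = c})"
      by auto
  qed
  moreover have "finite (\<Union>c\<in>?E. {d. d ^ 2 = c})"
    using poly_roots_finite[OF \<open>R \<noteq> 0\<close>] finite_square_roots by blast
  ultimately show ?thesis
    by (rule finite_subset)
qed

lemma poly_power_factor_decompose:
  fixes l P :: "'a::idom poly"
  assumes "degree l > 0" and "P \<noteq> 0"
  obtains k Q where "P = l ^ k * Q" and "\<not> l dvd Q"
  using assms(2)
proof (induction "degree P" arbitrary: P thesis rule: less_induct)
  case less
  show ?case
  proof (cases "l dvd P")
    case False
    then show ?thesis
      using less.prems(1)[of 0 P] by simp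
  next
    case True
    then obtain P' where P': "P = l * P'"
      by (auto elim: dvdE)
    with less.prems(2) have "P' \<noteq> 0" "l \<noteq> 0"
      by auto
    with P' assms(1) have "degree P' < degree P"
      by (simp add: degree_mult_eq)
    then obtain k Q where "P' = l ^ k * Q" "\<not> l dvd Q"
      using less.hyps \<open>P' \<noteq> 0\<close> by blast
    with P' show ?thesis
      using less.prems(1)[of "Suc k" Q] by (simp add: mult_ac)
  qed
qed

lemma sum_squares_isotropic_factors:
  fixes X Y v :: "'a::comm_ring_1"
  assumes "v * v = -1"
  shows "X ^ 2 + Y ^ 2 = (X + v * Y) * (X + (- v) * Y)"
proof -
  have "(X + v * Y) * (X + (- v) * Y) = X * X - (v * v) * (Y * Y)"
    by (simp add: algebra_simps)
  with assms show ?thesis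
    by (simp add: power2_eq_square)
qed

text \<open>Away from \<open>A\<close> the conchoid avoids the isotropic line \<open>l\<close>, so after dividing the conchoid
  polynomial by the largest power of \<open>l\<close> the cofactor still vanishes on the conchoid but no longer
  on \<open>l\<close>.\<close>

lemma isotropic_line_subset_conchoid_finite:
  fixes f :: "'a::field_char_0 poly poly"
  assumes irr: "irreducible f" and nl: "\<not> line_through (a, b) (curve f)"
    and v: "v * v = -1"
    and on_line: "\<And>x y. (x, y) \<in> M \<Longrightarrow> 1 * (x - a) + v * (y - b) = 0"
    and M_sub: "M \<subseteq> conchoid f (a, b) d"
  shows "finite M"
proof -
  let ?l = "line_poly 1 v a b"
  have "degree ?l > 0"
    using v by (auto simp: line_poly_def)
  obtain k Q where PQ: "conchoid_poly f a b (d ^ 2) = ?l ^ k * Q" and ndvd: "\<not> ?l dvd Q"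
    using poly_power_factor_decompose[OF \<open>degree ?l > 0\<close> conchoid_poly_nonzero[OF irr nl]] .
  have Q_vanishes: "eval2 Q x y = 0" if "(x, y) \<in> M" and "(x, y) \<noteq> (a, b)" for x y
  proof (rule zariski_closure_vanishing_off_point)
    show "(x, y) \<in> zariski_closure (fst ` conchoid_B f (a, b) d)"
      using that(1) M_sub by (auto simp: conchoid_def)
  next
    fix z1 z2
    assume z: "(z1, z2) \<in> fst ` conchoid_B f (a, b) d" "(z1, z2) \<noteq> (a, b)"
    have "(z1 - a) ^ 2 + (z2 - b) ^ 2 \<noteq> 0"
      using conchoid_B_point_imp_ray_root[OF z] by blast
    then have "eval2 ?l z1 z2 \<noteq> 0"
      unfolding sum_squares_isotropic_factors[OF v] by auto
    moreover have "eval2 ?l z1 z2 ^ k * eval2 Q z1 z2 = 0"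
      using conchoid_poly_vanishes_on_conchoid_B[OF z] unfolding PQ by simp
    ultimately show "eval2 Q z1 z2 = 0"
      by simp
  qed (use that in simp)
  have "M \<subseteq> insert (a, b) {(x, y). 1 * (x - a) + v * (y - b) = 0 \<and> eval2 Q x y = 0}"
    using on_line Q_vanishes by auto
  moreover have "finite {(x, y). 1 * (x - a) + v * (y - b) = 0 \<and> eval2 Q x y = 0}"
    by (rule finite_line_inter_zeros) (use ndvd in simp_all)
  ultimately show ?thesis
    using finite_subset by blast
qed

lemma infinite_curve_if_degree_pos:
  fixes g :: "'a::{alg_closed_field, field_char_0} poly poly"
  assumes "degree g > 0"
  shows "infinite (curve g)"
proof -
  have "lead_coeff g \<noteq> 0"
    using assms by auto
  then have "infinite (UNIV - {x. poly (lead_coeff g) x = 0})"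
    by (intro Diff_infinite_finite poly_roots_finite infinite_UNIV_char_0)
  moreover have "UNIV - {x. poly (lead_coeff g) x = 0} \<subseteq> fst ` curve g"
  proof
    fix x
    assume "x \<in> UNIV - {x. poly (lead_coeff g) x = 0}"
    then have "coeff (map_poly (\<lambda>c. poly c x) g) (degree g) \<noteq> 0"
      by (simp add: coeff_map_poly)
    then have "degree (map_poly (\<lambda>c. poly c x) g) > 0"
      using assms le_degree by fastforce
    then obtain y where "poly (map_poly (\<lambda>c. poly c x) g) y = 0"
      using alg_closed_imp_poly_has_root by blast
    then have "(x, y) \<in> curve g"
      by (simp add: curve_def eval2_conv_map_poly)
    then show "x \<in> fst ` curve g"
      by force
  qed
  ultimately show ?thesis
    using finite_subset by blast
qed

lemma infinite_curve_if_const_in_y2: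
  fixes c :: "'a::{alg_closed_field, field_char_0} poly"
  assumes "degree c > 0"
  shows "infinite (curve [:c:])"
proof -
  obtain r where "poly c r = 0"
    using alg_closed_imp_poly_has_root[OF assms] by blast
  then have "range (Pair r) \<subseteq> curve [:c:]"
    by (auto simp: curve_def eval2_def)
  moreover have "infinite (range (Pair r :: 'a \<Rightarrow> 'a \<times> 'a))"
    using infinite_UNIV_char_0 by (metis finite_imageD inj_onI prod.inject)
  ultimately show ?thesis
    using finite_subset by blast
qed

lemma irreducible_curve_infinite:
  fixes g :: "'a::{alg_closed_field, field_char_0} poly poly"
  assumes "irreducible g"
  shows "infinite (curve g)"
proof (cases "degree g = 0")
  case True
  then obtain c where g: "g = [:c:]"
    by (metis degree_0_id)
  from assms have "\<not> is_unit c" and "c \<noteq> 0"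
    by (auto simp: g irreducible_def is_unit_const_poly_iff)
  then have "degree c > 0"
    by (metis degree_0_id dvd_field_iff is_unit_const_poly_iff neq0_conv pCons_eq_0_iff)
  then show ?thesis
    unfolding g by (rule infinite_curve_if_const_in_y2)
next
  case False
  then show ?thesis
    by (simp add: infinite_curve_if_degree_pos)
qed

lemma zariski_irreducible_subset_zero_set_Un:
  assumes "zariski_irreducible M" and "M \<subseteq> zero_set {p} \<union> zero_set {q}"
  shows "M \<subseteq> zero_set {p} \<or> M \<subseteq> zero_set {q}"
proof -
  obtain F where F: "M = zero_set F"
    using assms(1) by (auto simp: zariski_irreducible_def zariski_closed_def)
  with assms(2) have "M = zero_set (insert p F) \<union> zero_set (insert q F)"
    by (auto simp: zero_set_def)
  moreover have "zariski_closed (zero_set (insert p F))" "zariski_closed (zero_set (insert q F))"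
    by (auto simp: zariski_closed_def)
  ultimately have "M = zero_set (insert p F) \<or> M = zero_set (insert q F)"
    using assms(1) unfolding zariski_irreducible_def by blast
  then show ?thesis
    by (auto simp: zero_set_def)
qed

lemma zariski_irreducible_isotropic_subset_line:
  fixes M :: "('a::alg_closed_field \<times> 'a) set"
  assumes irr: "zariski_irreducible M" and N: "\<And>x y. (x, y) \<in> M \<Longrightarrow> (x - a) ^ 2 + (y - b) ^ 2 = 0"
  obtains v where "v * v = -1" and "\<And>x y. (x, y) \<in> M \<Longrightarrow> 1 * (x - a) + v * (y - b) = 0"
proof -
  obtain i :: 'a where i: "i * i = -1"
    using nth_root_exists[of 2 "-1"] by (auto simp: power2_eq_square)
  have "(x - a + i * (y - b)) * (x - a + (- i) * (y - b)) = 0" if "(x, y) \<in> M" for x y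
    using N[OF that] unfolding sum_squares_isotropic_factors[OF i] .
  then have "M \<subseteq> zero_set {line_poly 1 i a b} \<union> zero_set {line_poly 1 (- i) a b}"
    by (auto simp: zero_set_def)
  then have "M \<subseteq> zero_set {line_poly 1 i a b} \<or> M \<subseteq> zero_set {line_poly 1 (- i) a b}"
    using irr by (intro zariski_irreducible_subset_zero_set_Un)
  then obtain v where "v * v = -1" and "M \<subseteq> zero_set {line_poly 1 v a b}"
    using i by (metis minus_mult_minus)
  then show ?thesis
    by (intro that) (auto simp: zero_set_def)
qed

theorem lemma4:
  fixes f :: "'a::{alg_closed_field, field_char_0} poly poly"
    and A :: "'a \<times> 'a"
  assumes irr: "irreducible f"
    and nonempty: "C0 f A \<noteq> {}"
    and not_circle: "\<not> (\<exists>r. curve f = circle_at A r)"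
    and not_line: "\<not> line_through A (curve f)"
  shows "\<not> (\<exists>D M. infinite D \<and> D \<subseteq> - {0} \<and> irreducible_curve M \<and>
              (\<forall>d\<in>D. component_of M (conchoid f A d)))"
proof
  assume "\<exists>D M. infinite D \<and> D \<subseteq> - {0} \<and> irreducible_curve M \<and>
      (\<forall>d\<in>D. component_of M (conchoid f A d))"
  then obtain D M where "infinite D" and "irreducible_curve M"
    and comp: "\<forall>d\<in>D. component_of M (conchoid f A d)"
    by blast
  obtain a b where A: "A = (a, b)"
    by fastforce
  obtain d0 where "d0 \<in> D"
    using \<open>infinite D\<close> by (metis finite.emptyI ex_in_conv)
  have M_sub: "M \<subseteq> conchoid f (a, b) d" if "d \<in> D" for d
    using comp that A by (auto simp: component_of_def)
  have "infinite M"
    using \<open>irreducible_curve M\<close> irreducible_curve_infinite by (auto simp: irreducible_curve_def)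
  from not_line A have nl: "\<not> line_through (a, b) (curve f)"
    by simp
  show False
  proof (cases "\<exists>p q. (p, q) \<in> M \<and> (p - a) ^ 2 + (q - b) ^ 2 \<noteq> 0")
    case True
    then obtain p q where "(p, q) \<in> M" and N: "(p - a) ^ 2 + (q - b) ^ 2 \<noteq> 0"
      by blast
    have "finite D"
      by (rule finite_distances_common_point[OF irr nl N]) (use \<open>(p, q) \<in> M\<close> M_sub in blast)
    with \<open>infinite D\<close> show False
      by contradiction
  next
    case False
    have "zariski_irreducible M"
      using comp \<open>d0 \<in> D\<close> by (simp add: component_of_def)
    then obtain v where v: "v * v = -1" and "\<And>x y. (x, y) \<in> M \<Longrightarrow> 1 * (x - a) + v * (y - b) = 0"
      using zariski_irreducible_isotropic_subset_line False by metis
    then have "finite M"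
      using isotropic_line_subset_conchoid_finite[OF irr nl v _ M_sub[OF \<open>d0 \<in> D\<close>]] by blast
    with \<open>infinite M\<close> show False
      by contradiction
  qed
qed

end
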